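(* Let $q$ be a prime power and $r\ge1$ an integer. For every integer $j$ with $0\le j\le q^r+1$ there exists a $q^r$-divisible set of points in a projective space over $\mathbb{F}_q$ of cardinality $$n=\frac{q^{2r}-1}{q-1}+j\cdot\left((q-1)q^r-\frac{q^r-1}{q-1}\right).$$
   Context: Points are $1$-dimensional subspaces of $\mathbb{F}_q^v$. A set $\mathcal{C}$ of points is $\Delta$-divisible if there is an integer $u$ with $|\mathcal{C}\cap H|\equiv u\pmod{\Delta}$ for every hyperplane $H$ of $\mathbb{F}_q^v$, where $\mathcal{C}\cap H$ is the set of points of $\mathcal{C}$ contained in $H$. *)

theory Defs
  imports Main "HOL-Library.Cardinality" "HOL-Number_Theory.Cong"
begin

text \<open>The ambient space F_q^v is modelled as the vectors x :: nat => 'a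
  (with 'a a finite field of order q) whose coordinates vanish outside {0..<v}.\<close>

definition vecs :: "nat \<Rightarrow> (nat \<Rightarrow> 'a::field) set" where
  "vecs v = {x. \<forall>i\<ge>v. x i = 0}"

definition points :: "nat \<Rightarrow> (nat \<Rightarrow> 'a::field) set set" where
  "points v = {{(\<lambda>i. c * x i) | c. True} | x. x \<in> vecs v \<and> x \<noteq> (\<lambda>i. 0)}"

definition hyperplanes :: "nat \<Rightarrow> (nat \<Rightarrow> 'a::field) set set" where
  "hyperplanes v = {{x \<in> vecs v. (\<Sum>i<v. a i * x i) = 0} | a.
                     (\<exists>i<v. a i \<noteq> 0)}"

definition divisible_pts :: "nat \<Rightarrow> nat \<Rightarrow> (nat \<Rightarrow> 'a::field) set set \<Rightarrow> bool" where
  "divisible_pts v \<Delta> C \<longleftrightarrow> C \<subseteq> points v \<and>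
     (\<exists>u::nat. \<forall>H \<in> hyperplanes v. [card {P \<in> C. P \<subseteq> H} = u] (mod \<Delta>))"

end

(*
  Take subspaces S_1, ..., S_j of dimension r of F_q^(2r) meeting pairwise in 0 (a Desarguesian
  spread, built from the field of order q^r, has q^r + 1 of them). In F_q^(2r + 2j) let K consist
  of the nonzero vectors of F_q^(2r) outside all S_t, together with the vectors s + a e_t + b f_t
  (s in S_t, a and b nonzero), where e_t, f_t are two new coordinates for each t. K is closed
  under nonzero scalars, so it is a set of |K| / (q - 1) points, which is the stated number.

  For a linear form, let W(X) count the vectors of X off its kernel. Then W(K) differs from
  W(F_q^(2r)), which is 0 or (q - 1) q^(2r - 1), by the sum of W(lift of S_t) - W(S_t), and
  W(lift of S_t) = (q - 1)^2 W(S_t) = W(S_t) modulo q^r because q^r divides q W(S_t). So all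
  the W(K) are divisible by q^r, and as q - 1 is prime to q, so are the numbers of points of K
  off each hyperplane.
*)

theory Submission
  imports Defs "HOL-Algebra.Algebraic_Closure_Type" "HOL-Number_Theory.Residues"
begin

section \<open>Coordinates over a finite subfield\<close>

definition vecs_over :: "'b::zero set \<Rightarrow> nat \<Rightarrow> (nat \<Rightarrow> 'b) set" where
  "vecs_over S k = {c. (\<forall>i<k. c i \<in> S) \<and> (\<forall>i\<ge>k. c i = 0)}"

definition lincomb :: "nat \<Rightarrow> (nat \<Rightarrow> 'b::comm_ring_1) \<Rightarrow> (nat \<Rightarrow> 'b) \<Rightarrow> 'b" where
  "lincomb k c w = (\<Sum>i<k. c i * w i)"

lemma vecs_over_UNIV: "vecs_over UNIV k = vecs k"
  by (simp add: vecs_over_def vecs_def)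

lemma bij_betw_restrict_vecs_over:
  "bij_betw (\<lambda>c. restrict c {..<k}) (vecs_over S k) (PiE {..<k} (\<lambda>_. S))"
  by (rule bij_betw_byWitness[where f' = "\<lambda>f i. if i < k then f i else 0"])
     (auto simp: vecs_over_def fun_eq_iff PiE_def extensional_def)

lemma card_vecs_over: "finite S \<Longrightarrow> card (vecs_over S k) = card S ^ k"
  using bij_betw_same_card[OF bij_betw_restrict_vecs_over] by (simp add: card_PiE)

lemma finite_vecs_over: "finite S \<Longrightarrow> finite (vecs_over S k)"
  unfolding bij_betw_finite[OF bij_betw_restrict_vecs_over] by (simp add: finite_PiE)

lemma card_vecs: "card (vecs n :: (nat \<Rightarrow> 'a::{finite,field}) set) = CARD('a) ^ n"
  by (simp flip: vecs_over_UNIV add: card_vecs_over)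

lemma finite_vecs: "finite (vecs n :: (nat \<Rightarrow> 'a::{finite,field}) set)"
  by (simp flip: vecs_over_UNIV add: finite_vecs_over)

lemma zero_in_vecs: "(\<lambda>i. 0) \<in> vecs n"
  by (simp add: vecs_def)

locale subfield_set =
  fixes S :: "'b::field set"
  assumes zero_mem: "0 \<in> S" and one_mem: "1 \<in> S"
    and add_mem: "\<And>x y. x \<in> S \<Longrightarrow> y \<in> S \<Longrightarrow> x + y \<in> S"
    and uminus_mem: "\<And>x. x \<in> S \<Longrightarrow> - x \<in> S"
    and mult_mem: "\<And>x y. x \<in> S \<Longrightarrow> y \<in> S \<Longrightarrow> x * y \<in> S"
    and inverse_mem: "\<And>x. x \<in> S \<Longrightarrow> inverse x \<in> S"
begin

lemma diff_mem: "x \<in> S \<Longrightarrow> y \<in> S \<Longrightarrow> x - y \<in> S"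
  using add_mem uminus_mem by (metis diff_conv_add_uminus)

lemma divide_mem: "x \<in> S \<Longrightarrow> y \<in> S \<Longrightarrow> x / y \<in> S"
  using mult_mem inverse_mem by (simp add: divide_inverse)

lemma card_ge_2: "finite S \<Longrightarrow> card S \<ge> 2"
  using card_mono[of S "{0, 1}"] zero_mem one_mem by simp

lemma inj_on_lincomb_extend:
  assumes inj: "inj_on (\<lambda>c. lincomb k c w) (vecs_over S k)"
    and y: "y \<notin> (\<lambda>c. lincomb k c w) ` vecs_over S k"
  shows "inj_on (\<lambda>c. lincomb (Suc k) c (w(k := y))) (vecs_over S (Suc k))"
proof (rule inj_onI)
  fix c c' assume c: "c \<in> vecs_over S (Suc k)" and c': "c' \<in> vecs_over S (Suc k)"
    and eq: "lincomb (Suc k) c (w(k := y)) = lincomb (Suc k) c' (w(k := y))"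
  have split: "lincomb (Suc k) d (w(k := y)) = lincomb k d w + d k * y" for d
    by (simp add: lincomb_def)
  have ck: "c k = c' k"
  proof (rule ccontr)
    assume ne: "c k \<noteq> c' k"
    define d where "d = (\<lambda>i. if i < k then (c' i - c i) / (c k - c' k) else 0)"
    have d: "d \<in> vecs_over S k"
      using c c' by (auto simp: d_def vecs_over_def intro!: divide_mem diff_mem)
    have "(c k - c' k) * y = (\<Sum>i<k. (c' i - c i) * w i)"
      using eq by (simp add: split lincomb_def sum_subtractf algebra_simps)
    then have "y = (\<Sum>i<k. (c' i - c i) * w i) / (c k - c' k)"
      using ne by (simp add: eq_divide_eq mult.commute)
    also have "\<dots> = lincomb k d w" by (simp add: lincomb_def d_def sum_divide_distrib)
    finally show False using d y by blast
  qed
  have "lincomb k (c(k := 0)) w = lincomb k (c'(k := 0)) w"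
    using eq ck by (simp add: split lincomb_def)
  moreover have "c(k := 0) \<in> vecs_over S k" "c'(k := 0) \<in> vecs_over S k"
    using c c' by (auto simp: vecs_over_def zero_mem)
  ultimately have "c(k := 0) = c'(k := 0)" using inj by (metis inj_onD)
  then show "c = c'" using ck by (metis fun_upd_triv fun_upd_upd)
qed

text \<open>A longest family with injective coordinate map exists since \<open>card S ^ k \<le> card M\<close>;
  by \<open>inj_on_lincomb_extend\<close> it spans \<open>M\<close>.\<close>

theorem finite_subspace_coordinates:
  assumes fin: "finite S" "finite M"
    and M0: "0 \<in> M" and Madd: "\<And>x y. x \<in> M \<Longrightarrow> y \<in> M \<Longrightarrow> x + y \<in> M"
    and Msc: "\<And>a x. a \<in> S \<Longrightarrow> x \<in> M \<Longrightarrow> a * x \<in> M"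
  shows "\<exists>k w. bij_betw (\<lambda>c. lincomb k c w) (vecs_over S k) M"
proof -
  define N where "N = {k. \<exists>w. (\<forall>i<k. w i \<in> M) \<and> inj_on (\<lambda>c. lincomb k c w) (vecs_over S k)}"
  have lincomb_mem: "lincomb k c w \<in> M" if "\<forall>i<k. w i \<in> M" "\<forall>i<k. c i \<in> S" for k c w
    using that by (induction k) (simp_all add: lincomb_def M0 Madd Msc)
  have "k < card M" if "k \<in> N" for k
  proof -
    from that obtain w where w: "\<forall>i<k. w i \<in> M"
      and inj: "inj_on (\<lambda>c. lincomb k c w) (vecs_over S k)"
      by (auto simp: N_def)
    have "2 ^ k \<le> card S ^ k" using card_ge_2[OF fin(1)] by (simp add: power_mono)
    also have "\<dots> = card ((\<lambda>c. lincomb k c w) ` vecs_over S k)"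
      using inj by (simp add: card_image card_vecs_over fin)
    also have "\<dots> \<le> card M"
      using w fin by (intro card_mono) (auto simp: vecs_over_def intro: lincomb_mem)
    finally show ?thesis using less_exp[of k] by linarith
  qed
  then have "N \<subseteq> {..<card M}" by blast
  then have fN: "finite N" by (rule finite_subset) simp
  have "0 \<in> N" by (auto simp: N_def vecs_over_def inj_on_def fun_eq_iff)
  define k where "k = Max N"
  have "k \<in> N" using fN \<open>0 \<in> N\<close> unfolding k_def by (metis Max_in empty_iff)
  then obtain w where w: "\<forall>i<k. w i \<in> M" and inj: "inj_on (\<lambda>c. lincomb k c w) (vecs_over S k)"
    by (auto simp: N_def)
  have "(\<lambda>c. lincomb k c w) ` vecs_over S k = M"
  proof (rule ccontr)
    assume "(\<lambda>c. lincomb k c w) ` vecs_over S k \<noteq> M"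
    moreover have "(\<lambda>c. lincomb k c w) ` vecs_over S k \<subseteq> M"
      using w by (auto simp: vecs_over_def intro: lincomb_mem)
    ultimately obtain y where "y \<in> M" "y \<notin> (\<lambda>c. lincomb k c w) ` vecs_over S k" by blast
    then have "Suc k \<in> N"
      unfolding N_def using inj_on_lincomb_extend[OF inj] w by (auto intro!: exI[of _ "w(k := y)"])
    then show False using Max_ge[OF fN] k_def by fastforce
  qed
  with inj show ?thesis unfolding bij_betw_def by blast
qed

end

section \<open>Finite fields\<close>

lemma card_finite_field_ge_2: "CARD('a::{finite,field}) \<ge> 2"
  using card_mono[of "UNIV :: 'a set" "{0, 1}"] by simp

lemma CHAR_finite_field_pos: "CHAR('a::{finite,field}) > 0"
  by (rule finite_imp_CHAR_pos) simp

lemma prime_CHAR_finite_field: "Factorial_Ring.prime CHAR('a::{finite,field})"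
  by (rule prime_CHAR_semidom[OF CHAR_finite_field_pos])

lemma finite_field_power_card_minus_1:
  assumes "(x :: 'a::{finite,field}) \<noteq> 0"
  shows "x ^ (CARD('a) - 1) = 1"
proof -
  have "(\<Prod>y\<in>UNIV-{0}. y) = (\<Prod>y\<in>UNIV-{0::'a}. x * y)"
    by (rule prod.reindex_bij_witness[of _ "\<lambda>y. x * y" "\<lambda>y. y / x"]) (use assms in auto)
  also have "\<dots> = x ^ (CARD('a) - 1) * (\<Prod>y\<in>UNIV-{0::'a}. y)"
    by (simp add: prod.distrib card_Diff_singleton)
  finally show ?thesis by simp
qed

lemma finite_field_power_card: "(x :: 'a::{finite,field}) ^ CARD('a) = x"
proof -
  have "CARD('a) = Suc (CARD('a) - 1)" using card_finite_field_ge_2[where 'a='a] by simp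
  then have "x ^ CARD('a) = x * x ^ (CARD('a) - 1)" by (metis power_Suc)
  then show ?thesis using finite_field_power_card_minus_1[of x] by (cases "x = 0") auto
qed

lemma finite_field_power_card_power: "(x :: 'a::{finite,field}) ^ (CARD('a) ^ n) = x"
  by (induction n) (simp_all add: power_mult finite_field_power_card mult.commute[of "CARD('a)"])

lemma subfield_set_prime_field: "subfield_set (range (of_nat :: nat \<Rightarrow> 'a::{finite,field}))"
proof
  show "x + y \<in> range of_nat" "x * y \<in> range of_nat"
    if "x \<in> range (of_nat :: nat \<Rightarrow> 'a)" "y \<in> range (of_nat :: nat \<Rightarrow> 'a)" for x y
    using that by (auto simp flip: of_nat_add of_nat_mult)
  fix x :: 'a assume "x \<in> range of_nat"
  then obtain a where a: "x = of_nat a" by blast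
  have "of_nat (CHAR('a) * a - a) = - x"
    using CHAR_finite_field_pos[where 'a='a] by (simp add: a of_nat_diff)
  then show "- x \<in> range of_nat" by (metis rangeI)
  show "inverse x \<in> range of_nat"
  proof (cases "x = 0")
    case False
    have "CARD('a) - 1 = Suc (CARD('a) - 2)" using card_finite_field_ge_2[where 'a='a] by simp
    then have "inverse x = x ^ (CARD('a) - 2)"
      using finite_field_power_card_minus_1[OF False] by (auto intro: inverse_unique)
    then show ?thesis by (simp add: a flip: of_nat_power)
  qed (metis inverse_zero of_nat_0 rangeI)
qed (metis of_nat_0 rangeI, metis of_nat_1 rangeI)

lemma card_prime_field: "card (range (of_nat :: nat \<Rightarrow> 'a::{finite,field})) = CHAR('a)"
proof -
  have "range (of_nat :: nat \<Rightarrow> 'a) = of_nat ` {..<CHAR('a)}"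
    using CHAR_finite_field_pos[where 'a='a]
    by (auto simp: image_iff of_nat_eq_iff_cong_CHAR cong_def intro: exI[of _ "_ mod CHAR('a)"])
  moreover have "inj_on (of_nat :: nat \<Rightarrow> 'a) {..<CHAR('a)}"
    by (auto simp: inj_on_def of_nat_eq_iff_cong_CHAR cong_def)
  ultimately show ?thesis by (simp add: card_image)
qed

lemma card_finite_field_prime_power: "\<exists>k. CARD('a::{finite,field}) = CHAR('a) ^ k"
proof -
  have "\<exists>k w. bij_betw (\<lambda>c. lincomb k c w) (vecs_over (range of_nat) k) (UNIV :: 'a set)"
    by (rule subfield_set.finite_subspace_coordinates[OF subfield_set_prime_field]) auto
  then obtain k w where "bij_betw (\<lambda>c. lincomb k c w) (vecs_over (range of_nat) k) (UNIV :: 'a set)"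
    by blast
  then have "CARD('a) = card (vecs_over (range (of_nat :: nat \<Rightarrow> 'a)) k)"
    by (simp add: bij_betw_same_card)
  then show ?thesis by (auto simp: card_vecs_over card_prime_field)
qed

text \<open>\<open>X\<^sup>Q - X\<close> has derivative \<open>-1\<close>, so it splits into \<open>Q\<close> distinct linear factors.\<close>

lemma card_roots_power_eq_self:
  assumes "CHAR('b::alg_closed_field) dvd Q" and "Q \<ge> 2"
  shows "card {z :: 'b. z ^ Q = z} = Q"
proof -
  define P :: "'b poly" where "P = monom 1 Q + [:0, -1:]"
  have poly_P: "poly P z = z ^ Q - z" for z by (simp add: P_def poly_monom)
  have deg_P: "degree P = Q" and lead_P: "lead_coeff P = 1"
    using assms(2) by (simp_all add: P_def degree_add_eq_left degree_monom_eq coeff_eq_0)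
  have "(of_nat Q :: 'b) = 0" using assms(1) by (simp add: of_nat_eq_0_iff_char_dvd)
  then have pderiv_P: "poly (pderiv P) z = -1" for z
    by (simp add: P_def pderiv_add pderiv_monom pderiv_pCons)
  obtain A where size_A: "size A = Q" and P_A: "P = (\<Prod>x\<in>#A. [:-x, 1:])"
    using alg_closed_imp_factorization[of P] deg_P lead_P assms(2) by fastforce
  have count_A: "count A x \<le> 1" for x
  proof (rule ccontr)
    assume "\<not> count A x \<le> 1"
    then have "{#x, x#} \<subseteq># A" by (auto simp: subseteq_mset_def)
    then obtain B where "A = {#x, x#} + B" by (auto simp: mset_subset_eq_exists_conv)
    then have P_x: "P = [:-x, 1:] * ([:-x, 1:] * (\<Prod>y\<in>#B. [:-y, 1:]))" using P_A by simp
    have "poly (pderiv P) x = 0" unfolding P_x pderiv_mult poly_add poly_mult by simp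
    then show False using pderiv_P by simp
  qed
  have "z ^ Q = z \<longleftrightarrow> poly P z = 0" for z by (simp add: poly_P)
  also have "poly P z = 0 \<longleftrightarrow> z \<in># A" for z by (auto simp: P_A poly_prod_mset)
  finally have "z ^ Q = z \<longleftrightarrow> z \<in># A" for z .
  then have set_A: "set_mset A = {z. z ^ Q = z}" by auto
  have "size A = (\<Sum>x\<in>set_mset A. count A x)" by (rule size_multiset_overloaded_eq)
  also have "\<dots> = (\<Sum>x\<in>set_mset A. 1)"
    using count_A by (intro sum.cong) (auto intro: antisym simp: Suc_le_eq)
  finally show ?thesis using set_A size_A by simp
qed

lemma subfield_set_range_to_ac: "subfield_set (range (to_ac :: 'a::field \<Rightarrow> 'a alg_closure))"
proof
  show "x + y \<in> range to_ac" "x * y \<in> range to_ac"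
    if "x \<in> range to_ac" "y \<in> range to_ac" for x y :: "'a alg_closure"
    using that by (auto simp flip: to_ac_add to_ac_mult)
  show "- x \<in> range to_ac" "inverse x \<in> range to_ac" if "x \<in> range to_ac" for x :: "'a alg_closure"
    using that by (auto simp flip: to_ac_minus to_ac_inverse)
qed (metis to_ac_0 rangeI, metis to_ac_1 rangeI)

lemma bij_betw_to_ac_vecs:
  "bij_betw (\<lambda>c. to_ac \<circ> c) (vecs r :: (nat \<Rightarrow> 'a::field) set) (vecs_over (range to_ac) r)"
proof -
  have "to_ac (of_ac (c i)) = c i"
    if "c \<in> vecs_over (range to_ac) r" for c :: "nat \<Rightarrow> 'a alg_closure" and i
    using that by (cases "i < r") (auto simp: vecs_over_def to_ac_of_ac)
  then show ?thesis
    by (intro bij_betw_byWitness[where f' = "\<lambda>c. of_ac \<circ> c"])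
      (auto simp: vecs_def vecs_over_def fun_eq_iff)
qed

text \<open>\<open>K\<close> is \<open>{z. z ^ q ^ r = z}\<close>, closed under addition by the Freshman's Dream since
  \<open>q\<close> is a power of the characteristic.\<close>

lemma ex_field_extension_basis:
  assumes "r \<ge> 1"
  obtains K :: "'a::{finite,field} alg_closure set" and \<beta>
  where "\<And>x y. x \<in> K \<Longrightarrow> y \<in> K \<Longrightarrow> x * y \<in> K"
    and "bij_betw (\<lambda>c. \<Sum>i<r. to_ac (c i) * \<beta> i) (vecs r) K"
proof -
  define Q where "Q = CARD('a) ^ r"
  define K where "K = {z :: 'a alg_closure. z ^ Q = z}"
  obtain k where k: "CARD('a) = CHAR('a) ^ k" using card_finite_field_prime_power by blast
  have "CARD('a) ^ 1 \<le> Q" unfolding Q_def using assms card_finite_field_ge_2[where 'a='a]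
    by (intro power_increasing) auto
  moreover have "CHAR('a) dvd Q"
    unfolding Q_def using assms by (intro dvd_trans[OF CHAR_dvd_CARD] dvd_power) auto
  ultimately have card_K: "card K = Q"
    unfolding K_def using card_finite_field_ge_2[where 'a='a]
    by (intro card_roots_power_eq_self) auto
  then have "finite K"
    using card_finite_field_ge_2[where 'a='a] by (intro card_ge_0_finite) (simp add: Q_def)
  have add_K: "x + y \<in> K" if "x \<in> K" "y \<in> K" for x y
    using that freshmans_dream'[of "Q" "k * r" x y] prime_CHAR_finite_field[where 'a='a]
    by (simp add: K_def Q_def k power_mult)
  have mult_K: "x * y \<in> K" if "x \<in> K" "y \<in> K" for x y
    using that by (simp add: K_def power_mult_distrib)
  have "to_ac a \<in> K" for a :: 'a
    by (simp add: K_def Q_def finite_field_power_card_power flip: to_ac_power)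
  then have "\<exists>m w. bij_betw (\<lambda>c. lincomb m c w) (vecs_over (range to_ac) m) K"
    using \<open>finite K\<close> add_K mult_K
    by (intro subfield_set.finite_subspace_coordinates[OF subfield_set_range_to_ac])
      (auto simp: K_def Q_def)
  then obtain m w where bij: "bij_betw (\<lambda>c. lincomb m c w) (vecs_over (range to_ac) m) K"
    by blast
  have "CARD('a) ^ m = CARD('a) ^ r"
    using bij_betw_same_card[OF bij] card_K
    by (simp add: card_vecs_over card_image inj_to_ac Q_def)
  then have "m = r" using card_finite_field_ge_2[where 'a='a] by (simp add: power_inject_exp)
  then have "bij_betw ((\<lambda>c. lincomb r c w) \<circ> (\<lambda>c. to_ac \<circ> c)) (vecs r) K"
    using bij_betw_trans[OF bij_betw_to_ac_vecs] bij by simp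
  then show ?thesis using that[OF mult_K] by (simp add: comp_def lincomb_def)
qed

section \<open>Linear forms on \<open>\<bbbF>\<^sub>q\<^sup>n\<close>\<close>

definition lin_subspace :: "(nat \<Rightarrow> 'a::field) set \<Rightarrow> bool" where
  "lin_subspace U \<longleftrightarrow> (\<lambda>i. 0) \<in> U \<and> (\<forall>x\<in>U. \<forall>y\<in>U. (\<lambda>i. x i + y i) \<in> U)
     \<and> (\<forall>c. \<forall>x\<in>U. (\<lambda>i. c * x i) \<in> U)"

definition linform :: "(nat \<Rightarrow> 'a::field) \<Rightarrow> nat \<Rightarrow> (nat \<Rightarrow> 'a) \<Rightarrow> 'a" where
  "linform a n x = (\<Sum>i<n. a i * x i)"

lemma linform_add: "linform a n (\<lambda>i. x i + y i) = linform a n x + linform a n y"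
  by (simp add: linform_def distrib_left sum.distrib)

lemma linform_smult: "linform a n (\<lambda>i. c * x i) = c * linform a n x"
  by (simp add: linform_def sum_distrib_left mult_ac)

lemma linform_zero [simp]: "linform a n (\<lambda>i. 0) = 0"
  by (simp add: linform_def)

lemma lin_subspace_vecs: "lin_subspace (vecs n)"
  by (simp add: lin_subspace_def vecs_def)

text \<open>Translation by a vector of \<open>U\<close> on which the form is \<open>1\<close> maps each level set onto any
  other.\<close>

lemma card_linform_level_set:
  fixes U :: "(nat \<Rightarrow> 'a::{finite,field}) set"
  assumes U: "finite U" "lin_subspace U" and u: "u \<in> U" "linform a n u \<noteq> 0"
  shows "CARD('a) * card {x\<in>U. linform a n x = \<gamma>} = card U"
proof -
  define w where "w = (\<lambda>i. inverse (linform a n u) * u i)"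
  have "w \<in> U" and lw: "linform a n w = 1"
    using U(2) u by (simp_all add: lin_subspace_def w_def linform_smult)
  then have shift_mem: "(\<lambda>i. x i + c * w i) \<in> U" if "x \<in> U" for x c
    using U(2) that by (simp add: lin_subspace_def)
  have shift: "linform a n (\<lambda>i. x i + c * w i) = linform a n x + c" for x c
    by (simp add: linform_add linform_smult lw)
  have level: "card {x\<in>U. linform a n x = \<delta>} = card {x\<in>U. linform a n x = \<gamma>}" for \<delta>
    by (rule bij_betw_same_card[of "\<lambda>x i. x i + (\<gamma> - \<delta>) * w i"],
        rule bij_betw_byWitness[where f' = "\<lambda>x i. x i + (\<delta> - \<gamma>) * w i"])
      (auto simp: shift shift_mem fun_eq_iff, auto simp: algebra_simps)
  have "card U = (\<Sum>\<delta>\<in>UNIV. card {x\<in>U. linform a n x = \<delta>})"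
    unfolding card_eq_sum by (rule sum.group[symmetric]) (use U(1) in auto)
  also have "\<dots> = (\<Sum>\<delta>::'a\<in>UNIV. card {x\<in>U. linform a n x = \<gamma>})"
    by (rule sum.cong[OF refl]) (rule level)
  finally show ?thesis by simp
qed

lemma card_linform_neq_cong:
  fixes U :: "(nat \<Rightarrow> 'a::{finite,field}) set"
  assumes U: "finite U" "lin_subspace U"
  shows "[card {x\<in>U. linform a n x \<noteq> \<gamma>} = card {x\<in>U. linform a n x \<noteq> 0}] (mod card U)"
proof (cases "\<exists>u\<in>U. linform a n u \<noteq> 0")
  case True
  have "card {x\<in>U. linform a n x \<noteq> \<delta>} = card U - card {x\<in>U. linform a n x = \<delta>}" for \<delta>
    using U(1) by (subst card_Diff_subset[symmetric]) (auto intro: arg_cong[where f = card])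
  moreover obtain u where "u \<in> U" "linform a n u \<noteq> 0" using True by blast
  then have "CARD('a) * card {x\<in>U. linform a n x = \<gamma>} = CARD('a) * card {x\<in>U. linform a n x = 0}"
    using card_linform_level_set[OF U] by presburger
  then have "card {x\<in>U. linform a n x = \<gamma>} = card {x\<in>U. linform a n x = 0}"
    by (simp add: finite_UNIV_card_ge_0)
  ultimately show ?thesis by simp
next
  case False
  then have "{x\<in>U. linform a n x \<noteq> \<gamma>} = (if \<gamma> = 0 then {} else U)"
    and "{x\<in>U. linform a n x \<noteq> 0} = {}" by auto
  then show ?thesis unfolding cong_def by (metis card.empty mod_0 mod_self)
qed

lemma card_dvd_card_linform_nonzero:
  fixes U :: "(nat \<Rightarrow> 'a::{finite,field}) set"
  assumes U: "finite U" "lin_subspace U"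
  shows "card U dvd CARD('a) * card {x\<in>U. linform a n x \<noteq> 0}"
proof (cases "\<exists>u\<in>U. linform a n u \<noteq> 0")
  case True
  then obtain u where "u \<in> U" "linform a n u \<noteq> 0" by blast
  have "card {x\<in>U. linform a n x \<noteq> 0} = card U - card {x\<in>U. linform a n x = 0}"
    using U(1) by (subst card_Diff_subset[symmetric]) (auto intro: arg_cong[where f = card])
  then have "CARD('a) * card {x\<in>U. linform a n x \<noteq> 0} = CARD('a) * card U - card U"
    using card_linform_level_set[OF U \<open>u \<in> U\<close> \<open>linform a n u \<noteq> 0\<close>, of 0]
    by (simp add: right_diff_distrib')
  also have "\<dots> = (CARD('a) - 1) * card U" by (simp add: left_diff_distrib')
  finally show ?thesis by simp
next
  case False
  then have "{x\<in>U. linform a n x \<noteq> 0} = {}" by auto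
  then show ?thesis by (metis card.empty dvd_0_right mult_0_right)
qed

lemma power_card_dvd_card_linform_nonzero:
  "CARD('a::{finite,field}) ^ (n - 1) dvd card {x \<in> vecs n :: (nat \<Rightarrow> 'a) set. linform a m x \<noteq> 0}"
proof (cases n)
  case (Suc k)
  have "CARD('a) * CARD('a) ^ k
          dvd CARD('a) * card {x \<in> vecs n :: (nat \<Rightarrow> 'a) set. linform a m x \<noteq> 0}"
    using card_dvd_card_linform_nonzero[OF finite_vecs lin_subspace_vecs, of n a m]
    by (simp add: card_vecs Suc)
  then show ?thesis by (simp add: Suc)
qed simp

section \<open>Divisible sets of points from cones\<close>

definition line :: "(nat \<Rightarrow> 'a::field) \<Rightarrow> (nat \<Rightarrow> 'a) set" where
  "line x = {(\<lambda>i. c * x i) | c. True}"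

definition cone :: "nat \<Rightarrow> (nat \<Rightarrow> 'a::field) set \<Rightarrow> bool" where
  "cone v K \<longleftrightarrow> K \<subseteq> vecs v \<and> (\<lambda>i. 0) \<notin> K \<and> (\<forall>x\<in>K. \<forall>c. c \<noteq> 0 \<longrightarrow> (\<lambda>i. c * x i) \<in> K)"

lemma self_in_line: "x \<in> line x"
  unfolding line_def by (auto intro: exI[of _ 1])

lemma line_minus_zero:
  assumes "x \<noteq> (\<lambda>i. 0)"
  shows "line x - {\<lambda>i. 0} = (\<lambda>c i. c * x i) ` (UNIV - {0})"
  using assms unfolding line_def by (auto simp: fun_eq_iff)

lemma card_line_minus_zero:
  assumes "x \<noteq> (\<lambda>i. 0 :: 'a::{finite,field})"
  shows "card (line x - {\<lambda>i. 0}) = CARD('a) - 1"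
proof -
  have "inj (\<lambda>c i. c * x i)" using assms by (auto simp: inj_def fun_eq_iff)
  then show ?thesis
    unfolding line_minus_zero[OF assms] by (simp add: card_image inj_on_subset card_Diff_singleton)
qed

lemma line_smult:
  assumes "c \<noteq> 0"
  shows "line (\<lambda>i. c * x i) = line x"
proof (intro equalityI subsetI)
  fix y assume "y \<in> line (\<lambda>i. c * x i)"
  then obtain d where "y = (\<lambda>i. d * (c * x i))" by (auto simp: line_def)
  then have "y = (\<lambda>i. (d * c) * x i)" by (simp add: mult.assoc)
  then show "y \<in> line x" unfolding line_def by blast
next
  fix y assume "y \<in> line x"
  then obtain d where "y = (\<lambda>i. d * x i)" by (auto simp: line_def)
  then have "y = (\<lambda>i. (d / c) * (c * x i))" using assms by simp
  then show "y \<in> line (\<lambda>i. c * x i)" unfolding line_def by blast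
qed

lemma finite_cone: "cone v (K :: (nat \<Rightarrow> 'a::{finite,field}) set) \<Longrightarrow> finite K"
  unfolding cone_def using finite_vecs finite_subset by blast

lemma card_line_image_cone:
  fixes K :: "(nat \<Rightarrow> 'a::{finite,field}) set"
  assumes K: "cone v K"
  shows "(CARD('a) - 1) * card (line ` K) = card K"
proof -
  have fibre: "{y\<in>K. line y = line x} = line x - {\<lambda>i. 0}" if "x \<in> K" for x
  proof (intro equalityI subsetI)
    fix y assume "y \<in> {y\<in>K. line y = line x}"
    then show "y \<in> line x - {\<lambda>i. 0}" using K self_in_line[of y] unfolding cone_def by auto
  next
    fix y assume "y \<in> line x - {\<lambda>i. 0}"
    then obtain c where "y = (\<lambda>i. c * x i)" "y \<noteq> (\<lambda>i. 0)" by (auto simp: line_def)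
    moreover from this have "c \<noteq> 0" by auto
    ultimately show "y \<in> {y\<in>K. line y = line x}"
      using K \<open>x \<in> K\<close> line_smult unfolding cone_def by auto
  qed
  have "card {y\<in>K. line y = P} = CARD('a) - 1" if "P \<in> line ` K" for P
  proof -
    from that obtain x where "x \<in> K" "P = line x" by blast
    moreover have "x \<noteq> (\<lambda>i. 0)" using K \<open>x \<in> K\<close> unfolding cone_def by auto
    ultimately show ?thesis using fibre card_line_minus_zero by simp
  qed
  then have "(\<Sum>P\<in>line ` K. card {y\<in>K. line y = P}) = (CARD('a) - 1) * card (line ` K)"
    by simp
  also have "(\<Sum>P\<in>line ` K. card {y\<in>K. line y = P}) = card K"
    unfolding card_eq_sum by (rule sum.image_gen[symmetric]) (rule finite_cone[OF K])
  finally show ?thesis by simp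
qed

lemma line_image_cone_subset_points: "cone v K \<Longrightarrow> line ` K \<subseteq> points v"
  unfolding cone_def points_def line_def by blast

lemma points_in_hyperplane_cone:
  assumes K: "cone v K"
  shows "{P \<in> line ` K. P \<subseteq> {x \<in> vecs v. linform a v x = 0}} = line ` {x\<in>K. linform a v x = 0}"
proof -
  have "line x \<subseteq> {y \<in> vecs v. linform a v y = 0} \<longleftrightarrow> linform a v x = 0" if "x \<in> K" for x
  proof
    assume "line x \<subseteq> {y \<in> vecs v. linform a v y = 0}"
    then show "linform a v x = 0" using self_in_line by blast
  next
    assume "linform a v x = 0"
    moreover have "x \<in> vecs v" using K that by (auto simp: cone_def)
    ultimately show "line x \<subseteq> {y \<in> vecs v. linform a v y = 0}"
      by (auto simp: line_def linform_smult vecs_def)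
  qed
  then show ?thesis by blast
qed

lemma cone_kernel: "cone v K \<Longrightarrow> cone v {x\<in>K. linform a v x = 0}"
  unfolding cone_def by (auto simp: linform_smult)

text \<open>The points of \<open>line ` K\<close> off the hyperplane \<open>a = 0\<close> number
  \<open>card {x \<in> K. a x \<noteq> 0} / (q - 1)\<close>, and \<open>q - 1\<close> is prime to \<open>q\<^sup>r\<close>.\<close>

theorem cone_divisible:
  fixes K :: "(nat \<Rightarrow> 'a::{finite,field}) set"
  assumes K: "cone v K"
    and dvd: "\<And>a. CARD('a) ^ r dvd card {x\<in>K. linform a v x \<noteq> 0}"
  shows "divisible_pts v (CARD('a) ^ r) (line ` K)"
proof -
  have coprime: "coprime (CARD('a) ^ r) (CARD('a) - 1)"
    using card_finite_field_ge_2[where 'a='a]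
    by (metis Suc_diff_1 coprime_Suc_left_nat coprime_power_left_iff zero_less_card_finite)
  have "[card {P \<in> line ` K. P \<subseteq> H} = card (line ` K)] (mod CARD('a) ^ r)"
    if "H \<in> hyperplanes v" for H
  proof -
    from that obtain a where H: "H = {x \<in> vecs v. linform a v x = 0}"
      unfolding hyperplanes_def linform_def by blast
    let ?Z = "{x\<in>K. linform a v x = 0}" and ?N = "{x\<in>K. linform a v x \<noteq> 0}"
    have "card K = card ?Z + card ?N"
      using finite_cone[OF K]
      by (subst card_Un_disjoint[symmetric]) (auto intro: arg_cong[where f = card])
    moreover have "card (line ` ?Z) \<le> card (line ` K)"
      using finite_cone[OF K] by (intro card_mono) auto
    ultimately have "card ?N = (CARD('a) - 1) * (card (line ` K) - card (line ` ?Z))"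
      using card_line_image_cone[OF K] card_line_image_cone[OF cone_kernel[OF K]]
      by (simp add: diff_mult_distrib2)
    then have "CARD('a) ^ r dvd card (line ` K) - card (line ` ?Z)"
      using dvd[of a] coprime_dvd_mult_right_iff[OF coprime] by simp
    then show ?thesis
      using \<open>card (line ` ?Z) \<le> _\<close> H points_in_hyperplane_cone[OF K]
      by (simp add: cong_altdef_nat cong_sym_eq)
  qed
  then show ?thesis
    unfolding divisible_pts_def using line_image_cone_subset_points[OF K] by blast
qed

section \<open>Lifting a partial spread\<close>

definition trunc :: "nat \<Rightarrow> (nat \<Rightarrow> 'a::zero) \<Rightarrow> nat \<Rightarrow> 'a" where
  "trunc n x = (\<lambda>i. if i < n then x i else 0)"

lemma trunc_in_vecs: "trunc n x \<in> vecs n"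
  by (simp add: trunc_def vecs_def)

lemma linform_vecs_mono:
  assumes "x \<in> vecs n" "n \<le> m"
  shows "linform a m x = linform a n x"
  unfolding linform_def using assms by (intro sum.mono_neutral_right) (auto simp: vecs_def)

lemma bij_betw_filter: "bij_betw g A B \<Longrightarrow> bij_betw g {x\<in>A. P (g x)} {y\<in>B. P y}"
  unfolding bij_betw_def by (auto intro: inj_on_subset)

locale partial_spread =
  fixes r j :: nat and S :: "nat \<Rightarrow> (nat \<Rightarrow> 'a::{finite,field}) set"
  assumes spread_vecs: "\<And>t. t < j \<Longrightarrow> S t \<subseteq> vecs (2 * r)"
    and spread_subspace: "\<And>t. t < j \<Longrightarrow> lin_subspace (S t)"
    and card_spread: "\<And>t. t < j \<Longrightarrow> card (S t) = CARD('a) ^ r"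
    and spread_inter: "\<And>t t'. t < j \<Longrightarrow> t' < j \<Longrightarrow> t \<noteq> t' \<Longrightarrow> S t \<inter> S t' \<subseteq> {\<lambda>i. 0}"
begin

definition fresh :: "nat \<Rightarrow> nat" where
  "fresh t = 2 * r + 2 * t"

definition lift :: "nat \<Rightarrow> 'a \<Rightarrow> 'a \<Rightarrow> (nat \<Rightarrow> 'a) \<Rightarrow> nat \<Rightarrow> 'a" where
  "lift t \<alpha> \<beta> s = (\<lambda>i. if i < 2 * r then s i else if i = fresh t then \<alpha>
     else if i = Suc (fresh t) then \<beta> else 0)"

definition lifted :: "nat \<Rightarrow> (nat \<Rightarrow> 'a) set" where
  "lifted t = (\<lambda>((\<alpha>, \<beta>), s). lift t \<alpha> \<beta> s) ` (((UNIV - {0}) \<times> (UNIV - {0})) \<times> S t)"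

definition complement :: "(nat \<Rightarrow> 'a) set" where
  "complement = {x \<in> vecs (2 * r). x \<noteq> (\<lambda>i. 0) \<and> (\<forall>t<j. x \<notin> S t)}"

definition construction :: "(nat \<Rightarrow> 'a) set" where
  "construction = complement \<union> (\<Union>t<j. lifted t)"

lemma finite_spread: "t < j \<Longrightarrow> finite (S t)"
  using spread_vecs finite_vecs by (metis finite_subset)

lemma zero_in_spread: "t < j \<Longrightarrow> (\<lambda>i. 0) \<in> S t"
  using spread_subspace by (simp add: lin_subspace_def)

lemma lift_inject:
  assumes "lift t \<alpha> \<beta> s = lift t \<alpha>' \<beta>' s'" and "s \<in> vecs (2 * r)" "s' \<in> vecs (2 * r)"
  shows "\<alpha> = \<alpha>' \<and> \<beta> = \<beta>' \<and> s = s'"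
proof (intro conjI)
  show "\<alpha> = \<alpha>'" "\<beta> = \<beta>'"
    using fun_cong[OF assms(1), of "fresh t"] fun_cong[OF assms(1), of "Suc (fresh t)"]
    by (simp_all add: lift_def fresh_def)
  show "s = s'"
  proof
    fix i show "s i = s' i"
      using fun_cong[OF assms(1), of i] assms(2,3)
      by (cases "i < 2 * r") (simp_all add: lift_def vecs_def)
  qed
qed

lemma bij_betw_lifted:
  assumes "t < j"
  shows "bij_betw (\<lambda>((\<alpha>, \<beta>), s). lift t \<alpha> \<beta> s) (((UNIV - {0}) \<times> (UNIV - {0})) \<times> S t) (lifted t)"
  using spread_vecs[OF assms] unfolding bij_betw_def lifted_def
  by (auto simp: inj_on_def dest!: lift_inject)

lemma lift_at_fresh: "lift t' \<alpha> \<beta> s (fresh t) = (if t = t' then \<alpha> else 0)"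
  by (auto simp: lift_def fresh_def)

lemma lift_in_vecs: "t < j \<Longrightarrow> lift t \<alpha> \<beta> s \<in> vecs (2 * r + 2 * j)"
  by (auto simp: lift_def fresh_def vecs_def)

lemma smult_lift: "(\<lambda>i. c * lift t \<alpha> \<beta> s i) = lift t (c * \<alpha>) (c * \<beta>) (\<lambda>i. c * s i)"
  by (simp add: lift_def fun_eq_iff)

lemma linform_lift:
  assumes "t < j"
  shows "linform a (2 * r + 2 * j) (lift t \<alpha> \<beta> s)
           = linform a (2 * r) s + a (fresh t) * \<alpha> + a (Suc (fresh t)) * \<beta>"
proof -
  have "linform a (2 * r + 2 * j) (lift t \<alpha> \<beta> s)
          = (\<Sum>i\<in>{..<2 * r} \<union> {fresh t, Suc (fresh t)}. a i * lift t \<alpha> \<beta> s i)"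
    unfolding linform_def using assms
    by (intro sum.mono_neutral_right) (auto simp: lift_def fresh_def)
  also have "\<dots> = (\<Sum>i<2 * r. a i * lift t \<alpha> \<beta> s i) + a (fresh t) * \<alpha> + a (Suc (fresh t)) * \<beta>"
    by (subst sum.union_disjoint) (auto simp: lift_def fresh_def)
  also have "(\<Sum>i<2 * r. a i * lift t \<alpha> \<beta> s i) = linform a (2 * r) s"
    by (simp add: linform_def lift_def)
  finally show ?thesis .
qed

lemma cone_construction: "cone (2 * r + 2 * j) construction"
  unfolding cone_def
proof (intro conjI ballI allI impI)
  show "construction \<subseteq> vecs (2 * r + 2 * j)"
    using lift_in_vecs by (auto simp: construction_def complement_def lifted_def vecs_def)
  show "(\<lambda>i. 0) \<notin> construction"
  proof
    assume "(\<lambda>i. 0) \<in> construction"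
    then obtain t \<alpha> \<beta> s where "\<alpha> \<noteq> 0" "(\<lambda>i. 0) = lift t \<alpha> \<beta> s"
      by (auto simp: construction_def complement_def lifted_def)
    then have "lift t \<alpha> \<beta> s (fresh t) = 0" by (metis)
    then show False using \<open>\<alpha> \<noteq> 0\<close> by (simp add: lift_at_fresh)
  qed
next
  fix x and c :: 'a assume x: "x \<in> construction" and "c \<noteq> 0"
  show "(\<lambda>i. c * x i) \<in> construction"
  proof (cases "x \<in> complement")
    case True
    have "x \<in> S t" if "t < j" "(\<lambda>i. c * x i) \<in> S t" for t
    proof -
      have "(\<lambda>i. inverse c * (c * x i)) \<in> S t"
        using spread_subspace[OF that(1)] that(2) by (simp add: lin_subspace_def)
      then show ?thesis using \<open>c \<noteq> 0\<close> by (simp add: mult.assoc[symmetric])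
    qed
    then show ?thesis
      using True \<open>c \<noteq> 0\<close> by (auto simp: construction_def complement_def vecs_def fun_eq_iff)
  next
    case False
    then obtain t \<alpha> \<beta> s where "t < j" "\<alpha> \<noteq> 0" "\<beta> \<noteq> 0" "s \<in> S t" "x = lift t \<alpha> \<beta> s"
      using x by (auto simp: construction_def lifted_def)
    moreover have "(\<lambda>i. c * s i) \<in> S t"
      using spread_subspace[OF \<open>t < j\<close>] \<open>s \<in> S t\<close> by (simp add: lin_subspace_def)
    ultimately have "(\<lambda>i. c * x i) \<in> lifted t"
      using \<open>c \<noteq> 0\<close> unfolding lifted_def
      by (auto simp: smult_lift intro!: image_eqI[where x = "((c * \<alpha>, c * \<beta>), \<lambda>i. c * s i)"])
    then show ?thesis using \<open>t < j\<close> by (auto simp: construction_def)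
  qed
qed

lemma finite_lifted: "t < j \<Longrightarrow> finite (lifted t)"
  using finite_spread by (simp add: lifted_def)

lemma card_construction_filter:
  "card {x\<in>construction. P x} = card {x\<in>complement. P x} + (\<Sum>t<j. card {x\<in>lifted t. P x})"
proof -
  have lifted_at_fresh: "x (fresh t) \<noteq> 0 \<longleftrightarrow> t = t'" if "x \<in> lifted t'" for x t t'
    using that by (auto simp: lifted_def lift_at_fresh split: if_splits)
  have "x (fresh t) = 0" if "x \<in> complement" for x t
    using that by (simp add: complement_def vecs_def fresh_def)
  then have complement_lifted: "complement \<inter> lifted t = {}" for t
    using lifted_at_fresh by blast
  have lifted_lifted: "lifted t \<inter> lifted t' = {}" if "t \<noteq> t'" for t t'
    using that lifted_at_fresh by blast
  have "{x\<in>construction. P x} = {x\<in>complement. P x} \<union> (\<Union>t<j. {x\<in>lifted t. P x})"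
    by (auto simp: construction_def)
  moreover have "card (\<Union>t<j. {x\<in>lifted t. P x}) = (\<Sum>t<j. card {x\<in>lifted t. P x})"
    using finite_lifted lifted_lifted by (intro card_UN_disjoint) auto
  moreover have "finite {x\<in>complement. P x}"
    by (rule finite_subset[OF _ finite_vecs[of "2 * r"]]) (auto simp: complement_def)
  moreover have "{x\<in>complement. P x} \<inter> (\<Union>t<j. {x\<in>lifted t. P x}) = {}"
    using complement_lifted by blast
  ultimately show ?thesis
    using finite_lifted by (simp add: card_Un_disjoint)
qed

lemma card_vecs_filter:
  assumes "\<not> P (\<lambda>i. 0)"
  shows "card {x\<in>vecs (2 * r). P x} = card {x\<in>complement. P x} + (\<Sum>t<j. card {x\<in>S t. P x})"
proof -
  have "{x\<in>vecs (2 * r). P x} = {x\<in>complement. P x} \<union> (\<Union>t<j. {x\<in>S t. P x})"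
    using assms spread_vecs by (auto simp: complement_def)
  moreover have "card (\<Union>t<j. {x\<in>S t. P x}) = (\<Sum>t<j. card {x\<in>S t. P x})"
    using finite_spread spread_inter assms by (intro card_UN_disjoint) (fastforce+)
  moreover have "finite {x\<in>complement. P x}"
    by (rule finite_subset[OF _ finite_vecs[of "2 * r"]]) (auto simp: complement_def)
  moreover have "{x\<in>complement. P x} \<inter> (\<Union>t<j. {x\<in>S t. P x}) = {}"
    by (auto simp: complement_def)
  ultimately show ?thesis
    using finite_spread by (simp add: card_Un_disjoint)
qed

lemma card_lifted: "t < j \<Longrightarrow> card (lifted t) = (CARD('a) - 1)\<^sup>2 * CARD('a) ^ r"
  using bij_betw_same_card[OF bij_betw_lifted]
  by (simp add: card_cartesian_product card_spread card_Diff_singleton power2_eq_square)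

lemma card_construction:
  "int (card construction) = int CARD('a) ^ (2 * r) - 1 - int j * (int CARD('a) ^ r - 1)
                               + int j * (int CARD('a) - 1)\<^sup>2 * int CARD('a) ^ r"
proof -
  have nonzero: "card {x\<in>A. x \<noteq> (\<lambda>i. 0)} + 1 = card A"
    if "finite A" "(\<lambda>i. 0) \<in> A" for A :: "(nat \<Rightarrow> 'a) set"
  proof -
    have "{x\<in>A. x \<noteq> (\<lambda>i. 0)} = A - {\<lambda>i. 0}" by blast
    then show ?thesis using card_Suc_Diff1[OF that] by simp
  qed
  have "(\<Sum>t<j. card {x\<in>S t. x \<noteq> (\<lambda>i. 0)} + 1) = (\<Sum>t<j. CARD('a) ^ r)"
    using nonzero finite_spread zero_in_spread card_spread by (intro sum.cong) auto
  then have "(\<Sum>t<j. card {x\<in>S t. x \<noteq> (\<lambda>i. 0)}) + j = j * CARD('a) ^ r"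
    by (simp add: sum_Suc)
  moreover have "card {x \<in> vecs (2 * r) :: (nat \<Rightarrow> 'a) set. x \<noteq> (\<lambda>i. 0)} + 1 = CARD('a) ^ (2 * r)"
    using nonzero[OF finite_vecs zero_in_vecs] by (simp add: card_vecs)
  moreover have "{x\<in>complement. x \<noteq> (\<lambda>i. 0)} = complement" by (auto simp: complement_def)
  ultimately have
    "int (card complement) + int j * int CARD('a) ^ r + 1 = int CARD('a) ^ (2 * r) + int j"
    using card_vecs_filter[of "\<lambda>x. x \<noteq> (\<lambda>i. 0)"] by (simp flip: of_nat_power of_nat_mult)
  moreover have "card construction = card complement + j * ((CARD('a) - 1)\<^sup>2 * CARD('a) ^ r)"
    using card_construction_filter[of "\<lambda>_. True"] card_lifted by simp
  moreover have "int (CARD('a) - 1) = int CARD('a) - 1"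
    using card_finite_field_ge_2[where 'a='a] by simp
  ultimately show ?thesis by (simp add: algebra_simps)
qed

text \<open>Each of the \<open>(q - 1)\<^sup>2\<close> slices \<open>\<alpha>, \<beta>\<close> of the lift contributes \<open>N\<close> modulo \<open>q\<^sup>r\<close>,
  and \<open>(q - 1)\<^sup>2 N \<equiv> N\<close> since \<open>q\<^sup>r\<close> divides \<open>q N\<close>.\<close>

lemma card_lifted_linform_nonzero_cong:
  assumes "t < j"
  shows "[card {x\<in>lifted t. linform a (2 * r + 2 * j) x \<noteq> 0}
          = card {s\<in>S t. linform a (2 * r) s \<noteq> 0}] (mod CARD('a) ^ r)"
proof -
  define N where "N = card {s\<in>S t. linform a (2 * r) s \<noteq> 0}"
  define D where "D = (UNIV - {0::'a}) \<times> (UNIV - {0::'a})"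
  define c where "c = (\<lambda>(\<alpha>, \<beta>). a (fresh t) * \<alpha> + a (Suc (fresh t)) * \<beta>)"
  have "card {x\<in>lifted t. linform a (2 * r + 2 * j) x \<noteq> 0}
          = card {y\<in>D \<times> S t. linform a (2 * r + 2 * j) ((\<lambda>((\<alpha>, \<beta>), s). lift t \<alpha> \<beta> s) y) \<noteq> 0}"
    unfolding D_def
    by (rule bij_betw_same_card[OF bij_betw_filter[OF bij_betw_lifted[OF assms]], symmetric])
  also have "{y\<in>D \<times> S t. linform a (2 * r + 2 * j) ((\<lambda>((\<alpha>, \<beta>), s). lift t \<alpha> \<beta> s) y) \<noteq> 0}
               = (SIGMA ab:D. {s\<in>S t. linform a (2 * r) s \<noteq> - c ab})"
    by (auto simp: linform_lift[OF assms] c_def add.assoc eq_neg_iff_add_eq_0)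
  also have "card \<dots> = (\<Sum>ab\<in>D. card {s\<in>S t. linform a (2 * r) s \<noteq> - c ab})"
    using finite_spread[OF assms] by (simp add: D_def)
  also have "[\<dots> = (\<Sum>ab\<in>D. N)] (mod CARD('a) ^ r)"
    unfolding N_def
    using card_linform_neq_cong[OF finite_spread[OF assms] spread_subspace[OF assms],
        unfolded card_spread[OF assms]]
    by (intro cong_sum)
  finally have sum_N:
    "[card {x\<in>lifted t. linform a (2 * r + 2 * j) x \<noteq> 0} = (\<Sum>ab\<in>D. N)] (mod CARD('a) ^ r)" .
  obtain m where m: "CARD('a) = m + 2"
    using card_finite_field_ge_2[where 'a='a] by (metis add.commute le_Suc_ex)
  then have expand: "(\<Sum>ab\<in>D. N) = m * (CARD('a) * N) + N"
    by (simp add: D_def card_cartesian_product card_Diff_singleton power2_eq_square algebra_simps)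
  have "CARD('a) ^ r dvd CARD('a) * N"
    using card_dvd_card_linform_nonzero[OF finite_spread[OF assms] spread_subspace[OF assms]]
    by (simp add: N_def card_spread[OF assms])
  then have cancel: "[m * (CARD('a) * N) + N = 0 + N] (mod CARD('a) ^ r)"
    by (intro cong_add cong_refl) (simp add: cong_0_iff)
  show ?thesis using cong_trans[OF sum_N[unfolded expand] cancel] by (simp add: N_def)
qed

lemma power_card_dvd_construction_linform_nonzero:
  "CARD('a) ^ r dvd card {x\<in>construction. linform a (2 * r + 2 * j) x \<noteq> 0}"
proof -
  let ?f = "linform a (2 * r + 2 * j)"
  have spread_eq: "{s\<in>S t. linform a (2 * r) s \<noteq> 0} = {s\<in>S t. ?f s \<noteq> 0}" if "t < j" for t
  proof -
    have "s \<in> vecs (2 * r)" if "s \<in> S t" for s using spread_vecs \<open>t < j\<close> that by blast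
    then show ?thesis by (auto simp: linform_vecs_mono[of _ "2 * r" "2 * r + 2 * j"])
  qed
  have "[(\<Sum>t<j. card {x\<in>lifted t. ?f x \<noteq> 0}) = (\<Sum>t<j. card {s\<in>S t. ?f s \<noteq> 0})]
          (mod CARD('a) ^ r)"
  proof (rule cong_sum)
    fix t assume "t \<in> {..<j}"
    then show "[card {x\<in>lifted t. ?f x \<noteq> 0} = card {s\<in>S t. ?f s \<noteq> 0}] (mod CARD('a) ^ r)"
      using card_lifted_linform_nonzero_cong[of t a] spread_eq[of t] by simp
  qed
  moreover have "{x\<in>vecs (2 * r). ?f x \<noteq> 0} = {x\<in>vecs (2 * r). linform a (2 * r) x \<noteq> 0}"
    by (auto simp: linform_vecs_mono[of _ "2 * r" "2 * r + 2 * j"])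
  ultimately have "[card {x\<in>construction. ?f x \<noteq> 0}
                    = card {x\<in>vecs (2 * r). linform a (2 * r) x \<noteq> 0}] (mod CARD('a) ^ r)"
    using card_construction_filter[of "\<lambda>x. ?f x \<noteq> 0"] card_vecs_filter[of "\<lambda>x. ?f x \<noteq> 0"]
    by (simp add: cong_add_lcancel_nat)
  moreover have
    "CARD('a) ^ r dvd card {x \<in> vecs (2 * r) :: (nat \<Rightarrow> 'a) set. linform a (2 * r) x \<noteq> 0}"
  proof (cases "r = 0")
    case False
    then have "CARD('a) ^ r dvd CARD('a) ^ (2 * r - 1)" by (simp add: le_imp_power_dvd)
    then show ?thesis using power_card_dvd_card_linform_nonzero dvd_trans by blast
  qed simp
  ultimately show ?thesis by (simp add: cong_dvd_iff)
qed

theorem divisible_points_construction: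
  "divisible_pts (2 * r + 2 * j) (CARD('a) ^ r) (line ` construction)"
  by (rule cone_divisible[OF cone_construction power_card_dvd_construction_linform_nonzero])

theorem card_points_construction:
  "int (card (line ` construction)) =
     (int CARD('a) ^ (2 * r) - 1) div (int CARD('a) - 1)
     + int j * ((int CARD('a) - 1) * int CARD('a) ^ r
                - (int CARD('a) ^ r - 1) div (int CARD('a) - 1))"
  (is "_ = ?n")
proof -
  let ?q = "int CARD('a)"
  have "?q - 1 \<noteq> 0" using card_finite_field_ge_2[where 'a='a] by simp
  have exact: "(?q ^ m - 1) div (?q - 1) * (?q - 1) = ?q ^ m - 1" for m
    by (rule dvd_div_mult_self) (simp add: power_diff_1_eq)
  have "(?q - 1) * int (card (line ` construction)) = int (card construction)"
    using arg_cong[OF card_line_image_cone[OF cone_construction], of int]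
      card_finite_field_ge_2[where 'a='a] by (simp add: of_nat_diff)
  also have "\<dots> = (?q - 1) * ?n"
  proof -
    define A B where "A = (?q ^ (2 * r) - 1) div (?q - 1)" and "B = (?q ^ r - 1) div (?q - 1)"
    have "(?q - 1) * ?n = A * (?q - 1) + int j * (?q - 1)\<^sup>2 * ?q ^ r - int j * (B * (?q - 1))"
      unfolding A_def B_def by (simp add: algebra_simps power2_eq_square)
    then show ?thesis unfolding card_construction A_def B_def exact by simp
  qed
  finally show ?thesis using \<open>?q - 1 \<noteq> 0\<close> by simp
qed

end

section \<open>The Desarguesian spread\<close>

definition upper_half :: "nat \<Rightarrow> (nat \<Rightarrow> 'a::zero) \<Rightarrow> nat \<Rightarrow> 'a" where
  "upper_half r x = (\<lambda>i. if i < r then x (r + i) else 0)"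

lemma upper_half_in_vecs: "upper_half r x \<in> vecs r"
  by (simp add: upper_half_def vecs_def)

lemma bij_betw_halves:
  "bij_betw (\<lambda>x. (trunc r x, upper_half r x)) (vecs (2 * r)) (vecs r \<times> vecs r)"
  by (rule bij_betw_byWitness[where f' = "\<lambda>(c, d) i. if i < r then c i else d (i - r)"])
     (auto simp: trunc_def upper_half_def vecs_def fun_eq_iff)

text \<open>\<open>spread_member (Some w)\<close> and \<open>spread_member None\<close> are the preimages of the lines
  \<open>y = w x\<close> and \<open>x = 0\<close> of \<open>K\<^sup>2\<close> under \<open>x \<mapsto> (phi (trunc r x), phi (upper_half r x))\<close>.\<close>

locale field_coordinates =
  fixes r :: nat and K :: "'b::field set" and emb :: "'a::{finite,field} \<Rightarrow> 'b"
    and phi :: "(nat \<Rightarrow> 'a) \<Rightarrow> 'b"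
  assumes bij_phi: "bij_betw phi (vecs r) K"
    and phi_add: "\<And>x y. phi (\<lambda>i. x i + y i) = phi x + phi y"
    and phi_smult: "\<And>c x. phi (\<lambda>i. c * x i) = emb c * phi x"
    and mult_closed: "\<And>x y. x \<in> K \<Longrightarrow> y \<in> K \<Longrightarrow> x * y \<in> K"
begin

definition spread_member :: "'b option \<Rightarrow> (nat \<Rightarrow> 'a) set" where
  "spread_member w = {x \<in> vecs (2 * r). case w of
     None \<Rightarrow> phi (trunc r x) = 0
   | Some c \<Rightarrow> phi (upper_half r x) = c * phi (trunc r x)}"

lemma phi_zero: "phi (\<lambda>i. 0) = 0"
  using phi_add[of "\<lambda>i. 0" "\<lambda>i. 0"] by (simp only: add_0_right add_cancel_right_right)

lemma phi_eq_0_iff: "x \<in> vecs r \<Longrightarrow> phi x = 0 \<longleftrightarrow> x = (\<lambda>i. 0)"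
  using bij_betw_imp_inj_on[OF bij_phi] zero_in_vecs phi_zero by (metis inj_onD)

lemma bij_betw_phi_halves:
  "bij_betw (\<lambda>x. (phi (trunc r x), phi (upper_half r x))) (vecs (2 * r)) (K \<times> K)"
  using bij_betw_trans[OF bij_betw_halves bij_betw_map_prod[OF bij_phi bij_phi]]
  by (simp add: comp_def)

lemma spread_member_subspace: "lin_subspace (spread_member w)"
proof -
  have "trunc r (\<lambda>i. x i + y i) = (\<lambda>i. trunc r x i + trunc r y i)"
    "upper_half r (\<lambda>i. x i + y i) = (\<lambda>i. upper_half r x i + upper_half r y i)"
    "trunc r (\<lambda>i. c * x i) = (\<lambda>i. c * trunc r x i)"
    "upper_half r (\<lambda>i. c * x i) = (\<lambda>i. c * upper_half r x i)" for x y :: "nat \<Rightarrow> 'a" and c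
    by (simp_all add: trunc_def upper_half_def fun_eq_iff)
  then show ?thesis
    by (cases w) (auto simp: lin_subspace_def spread_member_def vecs_def phi_add phi_smult phi_zero
        trunc_def[of r "\<lambda>i. 0"] upper_half_def[of r "\<lambda>i. 0"] algebra_simps)
qed

lemma card_spread_member:
  assumes "w \<in> insert None (Some ` K)"
  shows "card (spread_member w) = card K"
proof -
  define L where "L = (case w of None \<Rightarrow> {0} \<times> K | Some c \<Rightarrow> (\<lambda>a. (a, c * a)) ` K)"
  have "0 \<in> K" using bij_betwE[OF bij_phi] zero_in_vecs phi_zero by metis
  then have "{p \<in> K \<times> K. case w of None \<Rightarrow> fst p = 0 | Some c \<Rightarrow> snd p = c * fst p} = L"
    using assms mult_closed by (auto simp: L_def split: option.split)
  moreover have "card L = card K"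
    unfolding L_def by (cases w) (auto simp: card_cartesian_product card_image inj_on_def)
  ultimately show ?thesis
    using bij_betw_same_card[OF bij_betw_filter[OF bij_betw_phi_halves,
        of "\<lambda>p. case w of None \<Rightarrow> fst p = 0 | Some c \<Rightarrow> snd p = c * fst p"]]
    by (cases w) (simp_all add: spread_member_def)
qed

lemma spread_member_inter:
  assumes "w \<noteq> w'"
  shows "spread_member w \<inter> spread_member w' \<subseteq> {\<lambda>i. 0}"
proof
  fix x assume x: "x \<in> spread_member w \<inter> spread_member w'"
  then have "x \<in> vecs (2 * r)" by (simp add: spread_member_def)
  have "phi (trunc r x) = 0"
  proof (cases w)
    case (Some c)
    show ?thesis
    proof (cases w')
      case (Some c')
      with \<open>w = Some c\<close> x have "phi (trunc r x) = 0 \<or> c = c'"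
        by (auto simp: spread_member_def)
      then show ?thesis using assms \<open>w = Some c\<close> \<open>w' = Some c'\<close> by auto
    qed (use x in \<open>simp add: spread_member_def\<close>)
  qed (use x in \<open>simp add: spread_member_def\<close>)
  moreover from this have "phi (upper_half r x) = 0"
    using x assms by (cases w; cases w') (auto simp: spread_member_def)
  ultimately have "trunc r x = (\<lambda>i. 0)" "upper_half r x = (\<lambda>i. 0)"
    by (simp_all add: phi_eq_0_iff trunc_in_vecs upper_half_in_vecs)
  moreover have "trunc r (\<lambda>i. 0 :: 'a) = (\<lambda>i. 0)" "upper_half r (\<lambda>i. 0 :: 'a) = (\<lambda>i. 0)"
    by (simp_all add: trunc_def upper_half_def)
  ultimately show "x \<in> {\<lambda>i. 0}"
    using inj_onD[OF bij_betw_imp_inj_on[OF bij_betw_halves[of r]], where x = x and y = "\<lambda>i. 0"]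
      \<open>x \<in> vecs (2 * r)\<close> by (simp add: zero_in_vecs)
qed

lemma card_K: "card K = CARD('a) ^ r"
  using bij_betw_same_card[OF bij_phi] by (simp add: card_vecs)

lemma ex_partial_spread:
  assumes "j \<le> CARD('a) ^ r + 1"
  shows "\<exists>S :: nat \<Rightarrow> (nat \<Rightarrow> 'a) set. partial_spread r j S"
proof -
  have "finite K" using card_K by (intro card_ge_0_finite) simp
  then have "card {..<j} \<le> card (insert None (Some ` K))"
    using assms card_K by (simp add: card_image)
  then have "\<exists>g. g ` {..<j} \<subseteq> insert None (Some ` K) \<and> inj_on g {..<j}"
    using \<open>finite K\<close> by (intro card_le_inj) simp_all
  then obtain g where g: "g ` {..<j} \<subseteq> insert None (Some ` K)" "inj_on g {..<j}"
    by blast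
  have "partial_spread r j (spread_member \<circ> g)"
  proof
    fix t t' assume "t < j"
    then show "(spread_member \<circ> g) t \<subseteq> vecs (2 * r)" "lin_subspace ((spread_member \<circ> g) t)"
      "card ((spread_member \<circ> g) t) = CARD('a) ^ r"
      using g(1) card_K card_spread_member spread_member_subspace
      by (auto simp: spread_member_def)
    assume "t' < j" "t \<noteq> t'"
    then show "(spread_member \<circ> g) t \<inter> (spread_member \<circ> g) t' \<subseteq> {\<lambda>i. 0}"
      using \<open>t < j\<close> g(2) spread_member_inter by (simp add: inj_on_eq_iff)
  qed
  then show ?thesis by blast
qed

end

theorem ex_partial_spread_finite_field:
  assumes "r \<ge> 1" and "j \<le> CARD('a::{finite,field}) ^ r + 1"
  shows "\<exists>S :: nat \<Rightarrow> (nat \<Rightarrow> 'a) set. partial_spread r j S"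
proof -
  obtain K :: "'a alg_closure set" and \<beta> where "\<And>x y. x \<in> K \<Longrightarrow> y \<in> K \<Longrightarrow> x * y \<in> K"
    and "bij_betw (\<lambda>c. \<Sum>i<r. to_ac (c i) * \<beta> i) (vecs r) K"
    using ex_field_extension_basis[OF assms(1)] by blast
  then interpret field_coordinates r K to_ac "\<lambda>c. \<Sum>i<r. to_ac (c i) * \<beta> i"
    by unfold_locales (simp_all add: distrib_right sum.distrib sum_distrib_left mult.assoc)
  show ?thesis by (rule ex_partial_spread[OF assms(2)])
qed

theorem corollary4p17:
  fixes r j :: nat
  assumes "r \<ge> 1" and "j \<le> CARD('a::{finite,field}) ^ r + 1"
  shows "\<exists>v. \<exists>C :: (nat \<Rightarrow> 'a) set set.
           divisible_pts v (CARD('a) ^ r) C \<and>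
           int (card C) =
             (int CARD('a) ^ (2 * r) - 1) div (int CARD('a) - 1)
             + int j * ((int CARD('a) - 1) * int CARD('a) ^ r
                        - (int CARD('a) ^ r - 1) div (int CARD('a) - 1))"
proof -
  obtain S :: "nat \<Rightarrow> (nat \<Rightarrow> 'a) set" where "partial_spread r j S"
    using ex_partial_spread_finite_field[OF assms] by blast
  then interpret partial_spread r j S .
  show ?thesis using divisible_points_construction card_points_construction by blast
qed

end
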